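(* Let $\Bbbk$ be a unital ring and $n,r$ positive integers. If $r\ge n$ then $\Phi_{n,r}:\Bbbk W_n\to\operatorname{End}_\Bbbk(\mathbf V^{\otimes r})$ is faithful. If $r+1\ge n$ then $\Phi_{n,r+1/2}:\Bbbk W_{n-1}\to\operatorname{End}_\Bbbk(\mathbf V^{\otimes r}\otimes\mathbf v_n)$ is faithful.
   Context: $\mathbf V$ is a free $\Bbbk$-module with basis $\mathbf v_1,\dots,\mathbf v_n$. $W_n$ is the symmetric group on $\{1,\dots,n\}$ acting on $\mathbf V^{\otimes r}$ by $w(\mathbf v_{j_1}\otimes\cdots\otimes\mathbf v_{j_r})=\mathbf v_{w(j_1)}\otimes\cdots\otimes\mathbf v_{w(j_r)}$ extended linearly; $\Phi_{n,r}$ is the resulting representation. $W_{n-1}=\{w\in W_n:w(n)=n\}$ preserves $\mathbf V^{\otimes r}\otimes\mathbf v_n\subset\mathbf V^{\otimes(r+1)}$, and $\Phi_{n,r+1/2}$ is the resulting representation. *)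

theory Defs
  imports "HOL-Combinatorics.Permutations"
begin

text \<open>W_n: permutations of {1..n}; W_{n-1}: those fixing n.\<close>
definition Wn :: "nat \<Rightarrow> (nat \<Rightarrow> nat) set" where
  "Wn n = {w. w permutes {1..n}}"

definition Wn_fix :: "nat \<Rightarrow> (nat \<Rightarrow> nat) set" where
  "Wn_fix n = {w \<in> Wn n. w n = n}"

text \<open>Index words of the basis tensors v_{j_1} (x) ... (x) v_{j_r} of V^{(x) r}.\<close>
definition words :: "nat \<Rightarrow> nat \<Rightarrow> nat list set" where
  "words n r = {u. length u = r \<and> set u \<subseteq> {1..n}}"

text \<open>Index words of the basis of V^{(x) r} (x) v_n inside V^{(x)(r+1)}.\<close>
definition words_half :: "nat \<Rightarrow> nat \<Rightarrow> nat list set" where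
  "words_half n r = {u @ [n] | u. u \<in> words n r}"

definition group_alg :: "(nat \<Rightarrow> nat) set \<Rightarrow> ((nat \<Rightarrow> nat) \<Rightarrow> 'k::ring_1) set" where
  "group_alg G = {a. \<forall>w. w \<notin> G \<longrightarrow> a w = 0}"

text \<open>Free k-module with (finite) basis indexed by B, elements as coefficient functions.\<close>
definition tensors :: "nat list set \<Rightarrow> (nat list \<Rightarrow> 'k::ring_1) set" where
  "tensors B = {x. \<forall>u. u \<notin> B \<longrightarrow> x u = 0}"

text \<open>Linear extension of w(v_u) = v_{w(u)} (letterwise).\<close>
definition perm_act :: "nat list set \<Rightarrow> (nat \<Rightarrow> nat) \<Rightarrow> (nat list \<Rightarrow> 'k::ring_1) \<Rightarrow> (nat list \<Rightarrow> 'k)" where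
  "perm_act B w x = (\<lambda>u'. \<Sum>u\<in>{u \<in> B. map w u = u'}. x u)"

definition rep :: "(nat \<Rightarrow> nat) set \<Rightarrow> nat list set \<Rightarrow> ((nat \<Rightarrow> nat) \<Rightarrow> 'k::ring_1)
    \<Rightarrow> (nat list \<Rightarrow> 'k) \<Rightarrow> (nat list \<Rightarrow> 'k)" where
  "rep G B a = (\<lambda>x\<in>tensors B. (\<lambda>u'. \<Sum>w\<in>G. a w * perm_act B w x u'))"

definition faithful_rep :: "(nat \<Rightarrow> nat) set \<Rightarrow> nat list set \<Rightarrow> 'k::ring_1 itself \<Rightarrow> bool" where
  "faithful_rep G B _ = inj_on (rep G B :: ((nat \<Rightarrow> nat) \<Rightarrow> 'k) \<Rightarrow> _) (group_alg G)"

end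

theory Submission
  imports Defs "HOL-Library.Indicator_Function"
begin

text \<open>If some basis word u has trivial stabiliser in G, i.e. w \<mapsto> w(u) is injective on G,
  then the coefficient a_w of an element a of the group algebra is read off as the
  coordinate of a(v_u) at v_{w(u)}. For n \<le> r a word containing every letter 1, ..., n
  exists, and the half-integer case has the extra letter n at the end for free.\<close>

lemma perm_act_indicator:
  assumes "inj w" "u \<in> B"
  shows "perm_act B w (indicator {u} :: nat list \<Rightarrow> 'k::ring_1) = indicator {map w u}"
proof
  fix u'
  show "perm_act B w (indicator {u} :: _ \<Rightarrow> 'k) u' = indicator {map w u} u'"
  proof (cases "map w u = u'")
    case True
    with assms have "{v \<in> B. map w v = u'} = {u}"
      by (auto dest: injD[OF inj_mapI])
    with True show ?thesis
      by (simp add: perm_act_def indicator_def)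
  next
    case False
    then show ?thesis
      unfolding perm_act_def by (auto simp: indicator_def intro!: sum.neutral)
  qed
qed

lemma rep_indicator_apply:
  assumes "finite G" "\<forall>w\<in>G. inj w" "u \<in> B" "inj_on (\<lambda>w. map w u) G" "w0 \<in> G"
  shows "rep G B a (indicator {u}) (map w0 u) = (a w0 :: 'k::ring_1)"
proof -
  have "(indicator {u} :: nat list \<Rightarrow> 'k) \<in> tensors B"
    using assms(3) by (auto simp: tensors_def indicator_def)
  then have "rep G B a (indicator {u}) (map w0 u)
      = (\<Sum>w\<in>G. a w * indicator {map w u} (map w0 u))"
    using assms(2,3) by (simp add: rep_def perm_act_indicator)
  also have "\<dots> = (\<Sum>w\<in>G. if w = w0 then a w else 0)"
    using assms(4,5) by (intro sum.cong) (auto split: split_indicator dest: inj_onD)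
  also have "\<dots> = a w0"
    using assms(1,5) by simp
  finally show ?thesis .
qed

lemma faithful_rep_if_inj_on_map_word:
  assumes "finite G" "\<forall>w\<in>G. inj w" "u \<in> B" "inj_on (\<lambda>w. map w u) G"
  shows "faithful_rep G B TYPE('k::ring_1)"
  unfolding faithful_rep_def
proof (rule inj_onI)
  fix a b :: "(nat \<Rightarrow> nat) \<Rightarrow> 'k"
  assume a: "a \<in> group_alg G" and b: "b \<in> group_alg G" and eq: "rep G B a = rep G B b"
  show "a = b"
  proof
    fix w
    show "a w = b w"
    proof (cases "w \<in> G")
      case True
      then show ?thesis
        using eq rep_indicator_apply[OF assms True, of a] rep_indicator_apply[OF assms True, of b]
        by simp
    next
      case False
      with a b have "a w = 0" "b w = 0"
        by (simp_all add: group_alg_def)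
      then show ?thesis
        by simp
    qed
  qed
qed

lemma inj_on_map_word_permutes:
  assumes "S \<subseteq> set u"
  shows "inj_on (\<lambda>w. map w u) {w. w permutes S}"
proof (rule inj_onI, rule ext)
  fix w1 w2 x
  assume "w1 \<in> {w. w permutes S}" "w2 \<in> {w. w permutes S}" "map w1 u = map w2 u"
  then show "w1 x = w2 x"
    using assms by (cases "x \<in> S") (auto simp: permutes_not_in)
qed

lemma finite_Wn: "finite (Wn n)"
  unfolding Wn_def by (rule finite_permutations) simp

lemma inj_Wn: "\<forall>w\<in>Wn n. inj w"
  unfolding Wn_def by (auto simp: permutes_inj)

lemma inj_on_map_word_Wn:
  assumes "{1..n} \<subseteq> set u" "G \<subseteq> Wn n"
  shows "inj_on (\<lambda>w. map w u) G"
proof (rule inj_on_subset[OF inj_on_map_word_permutes[OF assms(1)]])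
  show "G \<subseteq> {w. w permutes {1..n}}"
    using assms(2) by (simp add: Wn_def)
qed

definition full_word :: "nat \<Rightarrow> nat \<Rightarrow> nat list" where
  "full_word n r = [1..<n] @ replicate (r + 1 - n) n"

lemma full_word_in_words:
  assumes "0 < n" "n \<le> r + 1"
  shows "full_word n r \<in> words n r"
  using assms by (auto simp: full_word_def words_def)

lemma atLeastAtMost_subset_set_full_word:
  assumes "n \<le> r"
  shows "{1..n} \<subseteq> set (full_word n r)"
  using assms by (auto simp: full_word_def)

lemma atLeastAtMost_subset_set_full_word_snoc: "{1..n} \<subseteq> set (full_word n r @ [n])"
  by (auto simp: full_word_def)

theorem lemma4p1:
  fixes n r :: nat
  assumes "0 < n" and "0 < r"
  shows "(r \<ge> n \<longrightarrow> faithful_rep (Wn n) (words n r) TYPE('k::ring_1))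
       \<and> (r + 1 \<ge> n \<longrightarrow> faithful_rep (Wn_fix n) (words_half n r) TYPE('k::ring_1))"
proof (intro conjI impI)
  assume "r \<ge> n"
  then have "full_word n r \<in> words n r" "inj_on (\<lambda>w. map w (full_word n r)) (Wn n)"
    using assms(1) full_word_in_words inj_on_map_word_Wn[OF atLeastAtMost_subset_set_full_word]
    by auto
  with finite_Wn inj_Wn show "faithful_rep (Wn n) (words n r) TYPE('k::ring_1)"
    by (rule faithful_rep_if_inj_on_map_word)
next
  assume "r + 1 \<ge> n"
  have sub: "Wn_fix n \<subseteq> Wn n"
    by (auto simp: Wn_fix_def)
  have "full_word n r @ [n] \<in> words_half n r"
    using full_word_in_words[OF assms(1) \<open>r + 1 \<ge> n\<close>] by (auto simp: words_half_def)
  moreover have "inj_on (\<lambda>w. map w (full_word n r @ [n])) (Wn_fix n)"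
    using atLeastAtMost_subset_set_full_word_snoc sub by (rule inj_on_map_word_Wn)
  ultimately show "faithful_rep (Wn_fix n) (words_half n r) TYPE('k::ring_1)"
    using finite_subset[OF sub finite_Wn] inj_Wn sub
    by (intro faithful_rep_if_inj_on_map_word) auto
qed

end
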